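(* Let $G=(V,E)$ be a finite planar embedded graph with $V=\{1,\dots,n\}$, let $\mathbf{p}$ be a packing of $G$, and let $V=V^+\sqcup V^-\sqcup V^=\sqcup V^0$ be a partition. Suppose $\omega$ is an equilibrium stress on $(G,\mathbf{p})$ whose radial force sum $\omega_i=\sum_{j:(i,j)\in E}\omega_{ij}(r_i+r_j)$ is strictly positive for $i\in V^-$, strictly negative for $i\in V^+$, and $0$ for $i\in V^0$. Let $\mathbf{p}'=(x_1',y_1',r_1',\dots,x_n',y_n',r_n')\in\mathbb{R}^{3n}$ be any vector (not required to be an infinitesimal flex), and write $D_{ij}=(\mathbf{p}_i-\mathbf{p}_j)\cdot(\mathbf{p}_i'-\mathbf{p}_j')-(r_i+r_j)(r_i'+r_j')$ for $(i,j)\in E$. Suppose that: $D_{ij}\ge 0$ whenever $\omega_{ij}<0$ (the disks stay tangent or separate to first order); $D_{ij}\le 0$ whenever $\omega_{ij}>0$ (the disks stay tangent or overlap to first order); and $r_k'\ge 0$ for $k\in V^+$, $r_k'\le 0$ for $k\in V^-$, $r_k'=0$ for $k\in V^=$. Then $r_k'=0$ for every $k\in V^+\cup V^-$, and $D_{ij}=0$ for every edge $(i,j)$ with $\omega_{ij}\neq 0$.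
   Context: A packing of a planar embedded graph $G=(V,E)$ is a vector $\mathbf{p}=(x_1,y_1,r_1,\dots,x_n,y_n,r_n)\in\mathbb{R}^{3n}$ with all $r_i>0$ such that $(r_i+r_j)^2=(x_i-x_j)^2+(y_i-y_j)^2$ for every edge $(i,j)\in E$, and around each vertex the neighbors appear in the same counterclockwise order as in the given embedding; $\mathbf{p}_i=(x_i,y_i)$, $\mathbf{p}_i'=(x_i',y_i')$. A stress is a function $\omega:E\to\mathbb{R}$; it is an equilibrium stress if $\sum_{j:(i,j)\in E}\omega_{ij}(\mathbf{p}_i-\mathbf{p}_j)=0$ for every vertex $i$. *)

theory Defs
  imports "HOL-Analysis.Analysis"
begin

text \<open>The edge set E is a symmetric irreflexive relation on
  the vertex set (each undirected edge appears as both (i,j) and (j,i)).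
  The planar embedding is given combinatorially by a rotation system:
  rot i lists the neighbours of i in counterclockwise cyclic order.\<close>

definition simple_graph_on :: "nat \<Rightarrow> (nat \<times> nat) set \<Rightarrow> bool" where
  "simple_graph_on n E \<longleftrightarrow> E \<subseteq> {1..n} \<times> {1..n} \<and> sym E \<and> (\<forall>i. (i,i) \<notin> E)"

definition nbrs :: "(nat \<times> nat) set \<Rightarrow> nat \<Rightarrow> nat set" where
  "nbrs E i = {j. (i,j) \<in> E}"

definition rotation_system :: "nat \<Rightarrow> (nat \<times> nat) set \<Rightarrow> (nat \<Rightarrow> nat list) \<Rightarrow> bool" where
  "rotation_system n E rot \<longleftrightarrow> (\<forall>i\<in>{1..n}. distinct (rot i) \<and> set (rot i) = nbrs E i)"

definition cyc_next :: "nat list \<Rightarrow> nat \<Rightarrow> nat" where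
  "cyc_next xs a = xs ! (((SOME k. k < length xs \<and> xs ! k = a) + 1) mod length xs)"

text \<open>Face permutation on darts: (i,j) goes to (j, successor of i around j).\<close>
definition face_step :: "(nat \<Rightarrow> nat list) \<Rightarrow> nat \<times> nat \<Rightarrow> nat \<times> nat" where
  "face_step rot d = (snd d, cyc_next (rot (snd d)) (fst d))"

definition num_faces :: "nat \<Rightarrow> (nat \<times> nat) set \<Rightarrow> (nat \<Rightarrow> nat list) \<Rightarrow> nat" where
  "num_faces n E rot =
     card ((\<lambda>d. {(face_step rot ^^ k) d | k. True}) ` E)
     + card {i \<in> {1..n}. nbrs E i = {}}"

definition num_components :: "nat \<Rightarrow> (nat \<times> nat) set \<Rightarrow> nat" where
  "num_components n E = card ((\<lambda>i. {j \<in> {1..n}. (i,j) \<in> E\<^sup>*}) ` {1..n})"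

text \<open>A rotation system is planar (genus 0 on every component) iff Euler's formula
  V - E + F = 2C holds, where E counts undirected edges (= half the darts).\<close>
definition planar_embedded_graph :: "nat \<Rightarrow> (nat \<times> nat) set \<Rightarrow> (nat \<Rightarrow> nat list) \<Rightarrow> bool" where
  "planar_embedded_graph n E rot \<longleftrightarrow>
     simple_graph_on n E \<and> rotation_system n E rot \<and>
     int n - int (card E div 2) + int (num_faces n E rot) = 2 * int (num_components n E)"

definition ccw_around :: "real \<times> real \<Rightarrow> (real \<times> real) list \<Rightarrow> bool" where
  "ccw_around c ps \<longleftrightarrow>
     (\<exists>k. sorted_wrt (<)
            (map (\<lambda>q. Arg (Complex (fst q - fst c) (snd q - snd c))) (rotate k ps)))"

definition packing ::
  "nat \<Rightarrow> (nat \<times> nat) set \<Rightarrow> (nat \<Rightarrow> nat list) \<Rightarrow>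
   (nat \<Rightarrow> real) \<Rightarrow> (nat \<Rightarrow> real) \<Rightarrow> (nat \<Rightarrow> real) \<Rightarrow> bool" where
  "packing n E rot x y r \<longleftrightarrow>
     (\<forall>i\<in>{1..n}. r i > 0) \<and>
     (\<forall>(i,j)\<in>E. (r i + r j)\<^sup>2 = (x i - x j)\<^sup>2 + (y i - y j)\<^sup>2) \<and>
     (\<forall>i\<in>{1..n}. ccw_around (x i, y i) (map (\<lambda>j. (x j, y j)) (rot i)))"

definition equilibrium_stress ::
  "nat \<Rightarrow> (nat \<times> nat) set \<Rightarrow> (nat \<Rightarrow> real) \<Rightarrow> (nat \<Rightarrow> real) \<Rightarrow> (nat \<Rightarrow> nat \<Rightarrow> real) \<Rightarrow> bool" where
  "equilibrium_stress n E x y \<omega> \<longleftrightarrow>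
     (\<forall>i\<in>{1..n}. (\<Sum>j\<in>nbrs E i. \<omega> i j * (x i - x j)) = 0 \<and>
                  (\<Sum>j\<in>nbrs E i. \<omega> i j * (y i - y j)) = 0)"

definition radial_force :: "(nat \<times> nat) set \<Rightarrow> (nat \<Rightarrow> real) \<Rightarrow> (nat \<Rightarrow> nat \<Rightarrow> real) \<Rightarrow> nat \<Rightarrow> real" where
  "radial_force E r \<omega> i = (\<Sum>j\<in>nbrs E i. \<omega> i j * (r i + r j))"

definition Dij ::
  "(nat \<Rightarrow> real) \<Rightarrow> (nat \<Rightarrow> real) \<Rightarrow> (nat \<Rightarrow> real) \<Rightarrow>
   (nat \<Rightarrow> real) \<Rightarrow> (nat \<Rightarrow> real) \<Rightarrow> (nat \<Rightarrow> real) \<Rightarrow> nat \<Rightarrow> nat \<Rightarrow> real" where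
  "Dij x y r x' y' r' i j =
     (x i - x j) * (x' i - x' j) + (y i - y j) * (y' i - y' j) - (r i + r j) * (r' i + r' j)"

end

theory Submission
  imports Defs
begin

text \<open>Principle of virtual work: splitting each \<open>D i j\<close> into the contributions of its two
  endpoints and summing over the neighbours of each vertex, the equilibrium condition
  cancels the translational parts and leaves
  \<open>(\<Sum>(i, j)\<in>E. \<omega> i j * D i j) = -2 * (\<Sum>i. r' i * \<omega>\<^sub>i)\<close>.
  The sign hypotheses make every term on the left \<open>\<le> 0\<close> and every term on the right
  \<open>\<ge> 0\<close>, so all of them vanish.\<close>

lemma sum_sym_relation_swap:
  assumes "sym E"
  shows "(\<Sum>(i, j)\<in>E. f j i) = (\<Sum>(i, j)\<in>E. f i j)"
proof -
  have "prod.swap ` E = E"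
    using assms unfolding sym_def by force
  then have "(\<Sum>(i, j)\<in>E. f i j) = (\<Sum>d\<in>prod.swap ` E. case_prod f d)"
    by simp
  also have "\<dots> = (\<Sum>(i, j)\<in>E. f j i)"
    by (subst sum.reindex) (auto simp: inj_on_def comp_def case_prod_beta)
  finally show ?thesis ..
qed

lemma sum_relation_nbrs:
  assumes "E \<subseteq> V \<times> V" and "finite V"
  shows "(\<Sum>d\<in>E. g d) = (\<Sum>i\<in>V. \<Sum>j\<in>nbrs E i. g (i, j))"
proof -
  have "E = Sigma V (nbrs E)"
    using assms(1) by (auto simp: nbrs_def)
  moreover have "finite (nbrs E i)" for i
    using assms by (auto intro: finite_subset[of _ V] simp: nbrs_def)
  ultimately show ?thesis
    using assms(2) by (simp add: sum.Sigma)
qed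

lemma virtual_work_identity:
  assumes E: "E \<subseteq> {1..n} \<times> {1..n}" "sym E"
    and \<omega>_sym: "\<forall>(i, j)\<in>E. \<omega> i j = \<omega> j i"
    and eq: "equilibrium_stress n E x y \<omega>"
  shows "(\<Sum>(i, j)\<in>E. \<omega> i j * Dij x y r x' y' r' i j)
           = - 2 * (\<Sum>i\<in>{1..n}. r' i * radial_force E r \<omega> i)"
proof -
  define half where "half i j =
    \<omega> i j * ((x i - x j) * x' i + (y i - y j) * y' i - (r i + r j) * r' i)" for i j
  have "(\<Sum>(i, j)\<in>E. \<omega> i j * Dij x y r x' y' r' i j) = (\<Sum>(i, j)\<in>E. half i j + half j i)"
    using \<omega>_sym by (intro sum.cong) (auto simp: half_def Dij_def algebra_simps)
  also have "\<dots> = 2 * (\<Sum>(i, j)\<in>E. half i j)"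
    using sum_sym_relation_swap[OF E(2), of half]
    by (simp add: sum.distrib case_prod_beta)
  also have "(\<Sum>(i, j)\<in>E. half i j) = (\<Sum>i\<in>{1..n}. \<Sum>j\<in>nbrs E i. half i j)"
    using sum_relation_nbrs[OF E(1) finite_atLeastAtMost, of "case_prod half"] by simp
  also have "\<dots> = (\<Sum>i\<in>{1..n}. - (r' i * radial_force E r \<omega> i))"
  proof (rule sum.cong)
    fix i assume i: "i \<in> {1..n}"
    have "(\<Sum>j\<in>nbrs E i. half i j)
        = x' i * (\<Sum>j\<in>nbrs E i. \<omega> i j * (x i - x j))
        + y' i * (\<Sum>j\<in>nbrs E i. \<omega> i j * (y i - y j))
        - r' i * (\<Sum>j\<in>nbrs E i. \<omega> i j * (r i + r j))"
      by (simp add: half_def sum_distrib_left sum_subtractf[symmetric]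
          sum.distrib[symmetric] algebra_simps)
    then show "(\<Sum>j\<in>nbrs E i. half i j) = - (r' i * radial_force E r \<omega> i)"
      using eq i by (simp add: equilibrium_stress_def radial_force_def)
  qed simp
  finally show ?thesis
    by (simp add: sum_negf)
qed

lemma sum_nonneg_add_sum_nonneg_eq_0_iff:
  fixes f :: "'a \<Rightarrow> 'c::ordered_comm_monoid_add" and g :: "'b \<Rightarrow> 'c"
  assumes "finite A" "finite B" "\<forall>a\<in>A. f a \<ge> 0" "\<forall>b\<in>B. g b \<ge> 0"
  shows "sum f A + sum g B = 0 \<longleftrightarrow> (\<forall>a\<in>A. f a = 0) \<and> (\<forall>b\<in>B. g b = 0)"
  using assms by (simp add: add_nonneg_eq_0_iff sum_nonneg sum_nonneg_eq_0_iff)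

lemma mult_nonpos_if_opposite_signs:
  fixes a b :: "'a::linordered_ring"
  assumes "a < 0 \<Longrightarrow> b \<ge> 0" and "a > 0 \<Longrightarrow> b \<le> 0"
  shows "a * b \<le> 0"
  using assms by (cases a "0::'a" rule: linorder_cases) (auto simp: mult_nonpos_nonneg mult_nonneg_nonpos)

theorem mainTheorem2:
  fixes n :: nat and E :: "(nat \<times> nat) set" and rot :: "nat \<Rightarrow> nat list"
    and x y r x' y' r' :: "nat \<Rightarrow> real" and \<omega> :: "nat \<Rightarrow> nat \<Rightarrow> real"
    and Vp Vm Veq V0 :: "nat set"
  assumes G: "planar_embedded_graph n E rot"
    and P: "packing n E rot x y r"
    and part: "Vp \<union> Vm \<union> Veq \<union> V0 = {1..n}"
    and disj: "Vp \<inter> Vm = {}" "Vp \<inter> Veq = {}" "Vp \<inter> V0 = {}"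
              "Vm \<inter> Veq = {}" "Vm \<inter> V0 = {}" "Veq \<inter> V0 = {}"
    and \<omega>_sym: "\<forall>(i,j)\<in>E. \<omega> i j = \<omega> j i"
    and eq: "equilibrium_stress n E x y \<omega>"
    and rad_m: "\<forall>i\<in>Vm. radial_force E r \<omega> i > 0"
    and rad_p: "\<forall>i\<in>Vp. radial_force E r \<omega> i < 0"
    and rad_0: "\<forall>i\<in>V0. radial_force E r \<omega> i = 0"
    and D_neg: "\<forall>(i,j)\<in>E. \<omega> i j < 0 \<longrightarrow> Dij x y r x' y' r' i j \<ge> 0"
    and D_pos: "\<forall>(i,j)\<in>E. \<omega> i j > 0 \<longrightarrow> Dij x y r x' y' r' i j \<le> 0"
    and r'_p: "\<forall>k\<in>Vp. r' k \<ge> 0"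
    and r'_m: "\<forall>k\<in>Vm. r' k \<le> 0"
    and r'_eq: "\<forall>k\<in>Veq. r' k = 0"
  shows "(\<forall>k\<in>Vp \<union> Vm. r' k = 0) \<and>
         (\<forall>(i,j)\<in>E. \<omega> i j \<noteq> 0 \<longrightarrow> Dij x y r x' y' r' i j = 0)"
proof -
  have E: "E \<subseteq> {1..n} \<times> {1..n}" "sym E"
    using G by (auto simp: planar_embedded_graph_def simple_graph_on_def)
  define edge_work where "edge_work = (\<lambda>(i, j). - (\<omega> i j * Dij x y r x' y' r' i j))"
  define vertex_work where "vertex_work i = - 2 * (r' i * radial_force E r \<omega> i)" for i
  have total: "sum edge_work E + sum vertex_work {1..n} = 0"
    using virtual_work_identity[OF E \<omega>_sym eq, of r x' y' r']
    by (simp add: edge_work_def vertex_work_def case_prod_unfold sum_negf sum_distrib_left)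
  have edge_nonneg: "\<forall>d\<in>E. edge_work d \<ge> 0"
    using D_neg D_pos mult_nonpos_if_opposite_signs unfolding edge_work_def by fastforce
  have vertex_nonneg: "\<forall>i\<in>{1..n}. vertex_work i \<ge> 0"
  proof
    fix i assume "i \<in> {1..n}"
    then have "i \<in> Vp \<or> i \<in> Vm \<or> i \<in> Veq \<or> i \<in> V0"
      using part by blast
    then have "radial_force E r \<omega> i * r' i \<le> 0"
      using rad_m rad_p rad_0 r'_p r'_m r'_eq by (auto intro!: mult_nonpos_if_opposite_signs)
    then show "vertex_work i \<ge> 0"
      by (simp add: vertex_work_def mult.commute)
  qed
  have "finite E"
    using E(1) by (rule finite_subset) simp
  then have "(\<forall>d\<in>E. edge_work d = 0) \<and> (\<forall>i\<in>{1..n}. vertex_work i = 0)"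
    using sum_nonneg_add_sum_nonneg_eq_0_iff[OF _ _ edge_nonneg vertex_nonneg] total by simp
  moreover have "radial_force E r \<omega> k \<noteq> 0" if "k \<in> Vp \<union> Vm" for k
    using that rad_m rad_p by force
  ultimately show ?thesis
    using part unfolding edge_work_def vertex_work_def by auto
qed

end
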